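(* Let $p\in[1,\infty]$ and $d\in\mathbb N$. For $n\in\mathbb N$ let $s_n\in\mathbb N$ and let $\mathbf w^{(n)}=(\mathbf w^{(n)}_0,\dots,\mathbf w^{(n)}_{s_n})\in\mathbb R^{s_n+1}$ be filter masks, let $m_0:=d$, $m_n:=m_{n-1}+s_n$, and let $\mathbf b_n\in\mathbb R^{m_n}$ be bias vectors. Suppose $\sum_{n=1}^\infty\|\mathbf b_n\|_p<\infty$, the infinite product $\prod_{n=1}^\infty\mathbf w^{(n)}_0$ converges to a nonzero limit (in particular all $\mathbf w^{(n)}_0\neq0$), and $$\sum_{n=1}^\infty\frac{\sum_{j=1}^{s_n}|\mathbf w^{(n)}_j|}{|\mathbf w^{(n)}_0|}<\infty.$$ Then the deep ReLU convolutional neural networks $x^{(n)}$ converge pointwise on $[0,1]^d$, i.e. for each $x\in[0,1]^d$ the sequence $\tilde x^{(n)}$ converges in $\ell^p$.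
   Context: $\sigma(t)=\max(t,0)$ applied componentwise. For $\mathbf x\in\mathbb R^m$ and $\mathbf w=(\mathbf w_0,\dots,\mathbf w_s)$, the convolution $\mathbf x*\mathbf w\in\mathbb R^{m+s}$ has entries $(\mathbf x*\mathbf w)_i=\sum_{j=\max(0,i-m)}^{\min(i-1,s)}\mathbf w_j\mathbf x_{i-j}$, $1\le i\le m+s$; equivalently $\mathbf x*\mathbf w=\mathbf W\mathbf x$ with $\mathbf W\in\mathbb R^{(m+s)\times m}$, $\mathbf W_{jk}=\mathbf w_{j-k}$ if $0\le j-k\le s$ and $0$ otherwise. The CNN is defined by $x^{(0)}:=x\in[0,1]^d$ and $x^{(n)}:=\sigma(x^{(n-1)}*\mathbf w^{(n)}+\mathbf b_n)\in\mathbb R^{m_n}$; $\tilde x^{(n)}\in\ell^p$ denotes $x^{(n)}$ extended by zeros beyond its first $m_n$ entries. *)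

theory Defs
  imports "HOL-Analysis.Analysis"
begin

text \<open>Vectors in R^m are represented as functions nat => real, indexed 1..m,
  and identified with their zero extension (entries outside 1..m are 0).\<close>

definition relu :: "real \<Rightarrow> real" where
  "relu t = max t 0"

definition lp_member :: "ereal \<Rightarrow> (nat \<Rightarrow> real) \<Rightarrow> bool" where
  "lp_member p x = (if p = \<infinity> then bounded (range (\<lambda>i. \<bar>x i\<bar>))
                    else summable (\<lambda>i. \<bar>x i\<bar> powr real_of_ereal p))"

definition lp_norm :: "ereal \<Rightarrow> (nat \<Rightarrow> real) \<Rightarrow> real" where
  "lp_norm p x = (if p = \<infinity> then (SUP i. \<bar>x i\<bar>)
                  else (\<Sum>i. \<bar>x i\<bar> powr real_of_ereal p) powr (1 / real_of_ereal p))"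

definition restrict_vec :: "nat \<Rightarrow> (nat \<Rightarrow> real) \<Rightarrow> nat \<Rightarrow> real" where
  "restrict_vec m x i = (if 1 \<le> i \<and> i \<le> m then x i else 0)"

text \<open>(x * w)_i = sum_{j=max(0,i-m)}^{min(i-1,s)} w_j x_{i-j}, for 1 <= i <= m+s\<close>
definition conv :: "nat \<Rightarrow> (nat \<Rightarrow> real) \<Rightarrow> nat \<Rightarrow> (nat \<Rightarrow> real) \<Rightarrow> nat \<Rightarrow> real" where
  "conv m x s w i = (if 1 \<le> i \<and> i \<le> m + s
      then (\<Sum>j\<in>{i - m .. min (i - 1) s}. w j * x (i - j)) else 0)"

primrec width :: "nat \<Rightarrow> (nat \<Rightarrow> nat) \<Rightarrow> nat \<Rightarrow> nat" where
  "width d s 0 = d"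
| "width d s (Suc n) = width d s n + s (Suc n)"

primrec cnn :: "nat \<Rightarrow> (nat \<Rightarrow> nat) \<Rightarrow> (nat \<Rightarrow> nat \<Rightarrow> real) \<Rightarrow> (nat \<Rightarrow> nat \<Rightarrow> real)
                 \<Rightarrow> (nat \<Rightarrow> real) \<Rightarrow> nat \<Rightarrow> nat \<Rightarrow> real" where
  "cnn d s w b x 0 = restrict_vec d x"
| "cnn d s w b x (Suc n) = restrict_vec (width d s (Suc n))
     (\<lambda>i. relu (conv (width d s n) (cnn d s w b x n) (s (Suc n)) (w (Suc n)) i + b (Suc n) i))"

end

theory Submission
  imports Defs
begin

text \<open>Write \<open>x\<^sub>n\<close> for the \<open>n\<close>-th layer, \<open>a\<^sub>n\<close> for its centre weight \<open>w\<^sup>(\<^sup>n\<^sup>)\<^sub>0\<close> and \<open>\<sigma>\<^sub>n\<close>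
  for the sum of the absolute values of its other weights. All layers are nonnegative and
  \<open>a\<^sub>n \<longrightarrow> 1\<close>, so eventually \<open>a\<^sub>n > 0\<close>; then the ReLU leaves \<open>a\<^sub>n x\<^sub>n\<^sub>-\<^sub>1\<close> unchanged, whence
  \<open>\<parallel>x\<^sub>n - a\<^sub>n x\<^sub>n\<^sub>-\<^sub>1\<parallel> \<le> \<sigma>\<^sub>n \<parallel>x\<^sub>n\<^sub>-\<^sub>1\<parallel> + \<parallel>b\<^sub>n\<parallel>\<close>. With \<open>P\<^sub>n = a\<^sub>1 \<cdots> a\<^sub>n \<longrightarrow> L \<noteq> 0\<close> the
  normalised layers \<open>z\<^sub>n = x\<^sub>n / P\<^sub>n\<close> satisfy
  \<open>\<parallel>z\<^sub>n - z\<^sub>n\<^sub>-\<^sub>1\<parallel> \<le> (\<sigma>\<^sub>n / \<bar>a\<^sub>n\<bar>) \<parallel>z\<^sub>n\<^sub>-\<^sub>1\<parallel> + \<parallel>b\<^sub>n\<parallel> / \<bar>P\<^sub>n\<bar>\<close> with summable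
  coefficients. A discrete Gronwall argument bounds \<open>\<parallel>z\<^sub>n\<parallel>\<close>, so the increments are summable,
  \<open>z\<^sub>n\<close> converges in \<open>\<ell>\<^sup>p\<close> by completeness, and so does \<open>x\<^sub>n = P\<^sub>n z\<^sub>n\<close>.\<close>

section \<open>Bounds on the \<open>\<ell>\<^sup>p\<close> norm\<close>

text \<open>Phrased through partial sums, such a bound needs no summability and survives pointwise
  limits.\<close>

definition lp_bounded :: "ereal \<Rightarrow> real \<Rightarrow> (nat \<Rightarrow> real) \<Rightarrow> bool" where
  "lp_bounded p C f \<longleftrightarrow> 0 \<le> C \<and> (if p = \<infinity> then (\<forall>i. \<bar>f i\<bar> \<le> C)
      else (\<forall>K. (\<Sum>i<K. \<bar>f i\<bar> powr real_of_ereal p) \<le> C powr real_of_ereal p))"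

lemma finite_exponentE:
  assumes "1 \<le> p" "p \<noteq> \<infinity>"
  obtains q where "p = ereal q" "1 \<le> q"
  using assms by (cases p) auto

lemma lp_bounded_imp_lp:
  assumes "1 \<le> p" "lp_bounded p C f"
  shows "lp_member p f \<and> lp_norm p f \<le> C"
proof (cases "p = \<infinity>")
  case True
  then have C: "0 \<le> C" "\<And>i. \<bar>f i\<bar> \<le> C" using assms(2) by (auto simp: lp_bounded_def)
  then have "bounded (range (\<lambda>i. \<bar>f i\<bar>))" by (auto simp: bounded_iff)
  moreover have "(SUP i. \<bar>f i\<bar>) \<le> C" by (rule cSUP_least) (auto simp: C)
  ultimately show ?thesis using True by (simp add: lp_member_def lp_norm_def)
next
  case False
  then obtain q where q: "p = ereal q" "1 \<le> q" using assms(1) finite_exponentE by blast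
  have C: "0 \<le> C" "\<And>K. (\<Sum>i<K. \<bar>f i\<bar> powr q) \<le> C powr q"
    using assms(2) q by (auto simp: lp_bounded_def)
  have sum: "summable (\<lambda>i. \<bar>f i\<bar> powr q)"
    by (rule summableI_nonneg_bounded[where x = "C powr q"]) (auto simp: C)
  have "(\<Sum>i. \<bar>f i\<bar> powr q) powr (1/q) \<le> (C powr q) powr (1/q)"
    by (intro powr_mono2 suminf_le_const suminf_nonneg sum C) (use q in auto)
  also have "\<dots> = C" using q C by (simp add: powr_powr)
  finally show ?thesis using q sum by (simp add: lp_member_def lp_norm_def)
qed

lemma lp_bounded_if_lp_norm_le:
  assumes "1 \<le> p" "lp_member p f" "lp_norm p f \<le> C"
  shows "lp_bounded p C f"
proof (cases "p = \<infinity>")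
  case True
  then have "bdd_above (range (\<lambda>i. \<bar>f i\<bar>))"
    using assms(2) by (simp add: lp_member_def bounded_imp_bdd_above)
  then have "\<bar>f i\<bar> \<le> C" for i
    using cSUP_upper[of i UNIV "\<lambda>i. \<bar>f i\<bar>"] assms(3) True by (simp add: lp_norm_def)
  then show ?thesis using True by (auto simp: lp_bounded_def intro: order_trans[OF abs_ge_zero])
next
  case False
  then obtain q where q: "p = ereal q" "1 \<le> q" using assms(1) finite_exponentE by blast
  have sum: "summable (\<lambda>i. \<bar>f i\<bar> powr q)" using assms(2) q by (simp add: lp_member_def)
  have norm: "lp_norm p f = (\<Sum>i. \<bar>f i\<bar> powr q) powr (1/q)" using q by (simp add: lp_norm_def)
  have "(\<Sum>i<K. \<bar>f i\<bar> powr q) \<le> (\<Sum>i. \<bar>f i\<bar> powr q)" for K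
    by (rule sum_le_suminf[OF sum]) auto
  also have "(\<Sum>i. \<bar>f i\<bar> powr q) = lp_norm p f powr q"
    using norm q suminf_nonneg[OF sum] by (simp add: powr_powr)
  also have "\<dots> \<le> C powr q" using norm assms(3) q by (intro powr_mono2) auto
  finally have "(\<Sum>i<K. \<bar>f i\<bar> powr q) \<le> C powr q" for K .
  moreover have "0 \<le> C" using norm assms(3) by (metis order_trans powr_ge_zero)
  ultimately show ?thesis using q by (auto simp: lp_bounded_def)
qed

lemma lp_bounded_lp_norm: "1 \<le> p \<Longrightarrow> lp_member p f \<Longrightarrow> lp_bounded p (lp_norm p f) f"
  by (rule lp_bounded_if_lp_norm_le) auto

lemma lp_norm_nonneg: "1 \<le> p \<Longrightarrow> lp_member p f \<Longrightarrow> 0 \<le> lp_norm p f"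
  using lp_bounded_lp_norm lp_bounded_def by blast

lemma abs_le_lp_bounded:
  assumes "1 \<le> p" "lp_bounded p C f"
  shows "\<bar>f i\<bar> \<le> C"
proof (cases "p = \<infinity>")
  case True then show ?thesis using assms(2) by (auto simp: lp_bounded_def)
next
  case False
  then obtain q where q: "p = ereal q" "1 \<le> q" using assms(1) finite_exponentE by blast
  have C: "0 \<le> C" "\<And>K. (\<Sum>j<K. \<bar>f j\<bar> powr q) \<le> C powr q"
    using assms(2) q by (auto simp: lp_bounded_def)
  have "\<bar>f i\<bar> powr q \<le> (\<Sum>j<Suc i. \<bar>f j\<bar> powr q)" by (rule member_le_sum) auto
  also have "\<dots> \<le> C powr q" by (rule C(2))
  finally have "\<bar>f i\<bar> powr q \<le> C powr q" .
  then show ?thesis using powr_mono2[of "1/q" "\<bar>f i\<bar> powr q" "C powr q"] q C by (simp add: powr_powr)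
qed

lemma lp_bounded_mono:
  assumes "1 \<le> p" "lp_bounded p C g" "\<And>i. \<bar>f i\<bar> \<le> \<bar>g i\<bar>"
  shows "lp_bounded p C f"
proof (cases "p = \<infinity>")
  case True then show ?thesis using assms by (auto simp: lp_bounded_def intro: order_trans)
next
  case False
  then obtain q where q: "p = ereal q" "1 \<le> q" using assms(1) finite_exponentE by blast
  have "(\<Sum>i<K. \<bar>f i\<bar> powr q) \<le> (\<Sum>i<K. \<bar>g i\<bar> powr q)" for K
    by (intro sum_mono powr_mono2) (use assms(3) q in auto)
  then show ?thesis using assms(2) q unfolding lp_bounded_def by (auto intro: order_trans)
qed

lemma lp_bounded_scale:
  assumes "1 \<le> p" "lp_bounded p C f"
  shows "lp_bounded p (\<bar>c\<bar> * C) (\<lambda>i. c * f i)"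
proof (cases "p = \<infinity>")
  case True then show ?thesis
    using assms(2) by (auto simp: lp_bounded_def abs_mult intro: mult_left_mono)
next
  case False
  then obtain q where q: "p = ereal q" "1 \<le> q" using assms(1) finite_exponentE by blast
  have C: "0 \<le> C" "\<And>K. (\<Sum>i<K. \<bar>f i\<bar> powr q) \<le> C powr q"
    using assms(2) q by (auto simp: lp_bounded_def)
  have "(\<Sum>i<K. \<bar>c * f i\<bar> powr q) = \<bar>c\<bar> powr q * (\<Sum>i<K. \<bar>f i\<bar> powr q)" for K
    by (simp add: abs_mult powr_mult sum_distrib_left)
  then have "(\<Sum>i<K. \<bar>c * f i\<bar> powr q) \<le> (\<bar>c\<bar> * C) powr q" for K
    using C by (simp add: powr_mult mult_left_mono)
  then show ?thesis using q C by (auto simp: lp_bounded_def)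
qed

lemma powr_convex_nonneg:
  fixes u v t q :: real
  assumes "0 \<le> u" "0 \<le> v" "0 \<le> t" "t \<le> 1" "1 \<le> q"
  shows "(t * u + (1 - t) * v) powr q \<le> t * u powr q + (1 - t) * v powr q"
proof -
  have powr_le_self: "r powr q \<le> r" if "0 \<le> r" "r \<le> 1" for r :: real
    using powr_mono'[of 1 q r] that assms(5) by simp
  consider "u = 0" | "v = 0" | "u > 0" "v > 0" using assms(1,2) by linarith
  then show ?thesis
  proof cases
    case 1
    then show ?thesis
      using mult_right_mono[OF powr_le_self[of "1 - t"], of "v powr q"] assms by (simp add: powr_mult)
  next
    case 2
    then show ?thesis
      using mult_right_mono[OF powr_le_self[of t], of "u powr q"] assms by (simp add: powr_mult)
  next
    case 3
    then show ?thesis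
      using convex_onD[OF powr_convex[OF assms(5)], where x = v and y = u and t = t] assms
      by (simp add: algebra_simps)
  qed
qed

text \<open>Minkowski: write \<open>\<bar>f i\<bar> + \<bar>g i\<bar>\<close> as \<open>A + B\<close> times a convex combination of \<open>\<bar>f i\<bar> / A\<close> and \<open>\<bar>g i\<bar> / B\<close>, and use convexity of \<open>t powr q\<close>.\<close>
lemma sum_powr_abs_add_le:
  fixes f g :: "'a \<Rightarrow> real"
  assumes q: "1 \<le> q" and AB: "0 < A" "0 < B"
    and f: "(\<Sum>i\<in>I. \<bar>f i\<bar> powr q) \<le> A powr q" and g: "(\<Sum>i\<in>I. \<bar>g i\<bar> powr q) \<le> B powr q"
  shows "(\<Sum>i\<in>I. \<bar>f i + g i\<bar> powr q) \<le> (A + B) powr q"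
proof -
  define t where "t = A / (A + B)"
  have t: "0 \<le> t" "t \<le> 1" "1 - t = B / (A + B)" using AB by (auto simp: t_def field_simps)
  have pointwise: "\<bar>f i + g i\<bar> powr q
      \<le> (A + B) powr q * (t * (\<bar>f i\<bar> / A) powr q + (1 - t) * (\<bar>g i\<bar> / B) powr q)" for i
  proof -
    have "(A + B) * (t * (\<bar>f i\<bar> / A)) = \<bar>f i\<bar>" "(A + B) * ((1 - t) * (\<bar>g i\<bar> / B)) = \<bar>g i\<bar>"
      using AB by (simp_all add: t(3)) (simp add: t_def)
    then have "\<bar>f i\<bar> + \<bar>g i\<bar> = (A + B) * (t * (\<bar>f i\<bar> / A) + (1 - t) * (\<bar>g i\<bar> / B))"
      by (simp add: distrib_left)
    then have "\<bar>f i + g i\<bar> powr q \<le> ((A + B) * (t * (\<bar>f i\<bar> / A) + (1 - t) * (\<bar>g i\<bar> / B))) powr q"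
      using q abs_triangle_ineq[of "f i" "g i"] by (intro powr_mono2) (auto simp del: times_divide_eq_right)
    also have "\<dots> = (A + B) powr q * (t * (\<bar>f i\<bar> / A) + (1 - t) * (\<bar>g i\<bar> / B)) powr q"
      using AB t by (simp add: powr_mult)
    also have "\<dots> \<le> (A + B) powr q * (t * (\<bar>f i\<bar> / A) powr q + (1 - t) * (\<bar>g i\<bar> / B) powr q)"
      using AB t q by (intro mult_left_mono powr_convex_nonneg) auto
    finally show ?thesis .
  qed
  have normalized: "(\<Sum>i\<in>I. (\<bar>h i\<bar> / C) powr q) \<le> 1"
    if "0 < C" "(\<Sum>i\<in>I. \<bar>h i\<bar> powr q) \<le> C powr q" for h :: "'a \<Rightarrow> real" and C
    using that by (simp add: powr_divide sum_divide_distrib[symmetric])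
  have "(\<Sum>i\<in>I. \<bar>f i + g i\<bar> powr q)
      \<le> (\<Sum>i\<in>I. (A + B) powr q * (t * (\<bar>f i\<bar> / A) powr q + (1 - t) * (\<bar>g i\<bar> / B) powr q))"
    by (rule sum_mono[OF pointwise])
  also have "\<dots> = (A + B) powr q *
      (t * (\<Sum>i\<in>I. (\<bar>f i\<bar> / A) powr q) + (1 - t) * (\<Sum>i\<in>I. (\<bar>g i\<bar> / B) powr q))"
    by (simp add: sum.distrib sum_distrib_left[symmetric])
  also have "\<dots> \<le> (A + B) powr q * (t * 1 + (1 - t) * 1)"
    using t normalized[OF AB(1) f] normalized[OF AB(2) g]
    by (intro mult_left_mono add_mono) auto
  finally show ?thesis by simp
qed

lemma lp_bounded_add:
  assumes p: "1 \<le> p" and f: "lp_bounded p A f" and g: "lp_bounded p B g"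
  shows "lp_bounded p (A + B) (\<lambda>i. f i + g i)"
proof -
  have AB: "0 \<le> A" "0 \<le> B" using f g by (auto simp: lp_bounded_def)
  consider "A = 0" | "B = 0" | "0 < A" "0 < B" using AB by linarith
  then show ?thesis
  proof cases
    case 1
    then show ?thesis using abs_le_lp_bounded[OF p f] g by simp
  next
    case 2
    then show ?thesis using abs_le_lp_bounded[OF p g] f by simp
  next
    case 3
    show ?thesis
    proof (cases "p = \<infinity>")
      case True then show ?thesis
        using f g by (auto simp: lp_bounded_def intro: order_trans[OF abs_triangle_ineq] add_mono)
    next
      case False
      then obtain q where q: "p = ereal q" "1 \<le> q" using p finite_exponentE by blast
      show ?thesis
        using f g q 3 by (auto simp: lp_bounded_def intro: sum_powr_abs_add_le)
    qed
  qed
qed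

lemma sum_lessThan_diff_shift:
  fixes g :: "nat \<Rightarrow> 'a::comm_monoid_add"
  assumes "g 0 = 0"
  shows "(\<Sum>i<K. g (i - j)) = (\<Sum>i<K - j. g i)"
proof (induction K)
  case (Suc K)
  then show ?case using assms by (cases "j \<le> K") (auto simp: Suc_diff_le)
qed simp

lemma lp_bounded_shift:
  assumes "1 \<le> p" "lp_bounded p C f" "f 0 = 0"
  shows "lp_bounded p C (\<lambda>i. f (i - j))"
proof (cases "p = \<infinity>")
  case True then show ?thesis using assms(2) by (auto simp: lp_bounded_def)
next
  case False
  then obtain q where q: "p = ereal q" "1 \<le> q" using assms(1) finite_exponentE by blast
  have "(\<Sum>i<K. \<bar>f (i - j)\<bar> powr q) = (\<Sum>i<K - j. \<bar>f i\<bar> powr q)" for K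
    using sum_lessThan_diff_shift[where g = "\<lambda>i. \<bar>f i\<bar> powr q"] assms(3) by simp
  then show ?thesis using assms(2) q by (auto simp: lp_bounded_def)
qed

lemma lp_bounded_limit:
  assumes p: "1 \<le> p" and lim: "\<And>i. (\<lambda>m. g m i) \<longlonglongrightarrow> h i"
    and bounded: "\<And>m. N \<le> m \<Longrightarrow> lp_bounded p C (g m)"
  shows "lp_bounded p C h"
proof (cases "p = \<infinity>")
  case True
  have "\<bar>h i\<bar> \<le> C" for i
  proof (rule tendsto_upperbound[OF tendsto_rabs[OF lim]])
    show "\<forall>\<^sub>F m in sequentially. \<bar>g m i\<bar> \<le> C"
      using bounded True by (auto simp: lp_bounded_def eventually_sequentially)
  qed simp
  then show ?thesis using True bounded[of N] by (auto simp: lp_bounded_def)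
next
  case False
  then obtain q where q: "p = ereal q" "1 \<le> q" using p finite_exponentE by blast
  have "(\<Sum>i<K. \<bar>h i\<bar> powr q) \<le> C powr q" for K
  proof (rule tendsto_upperbound)
    show "(\<lambda>m. \<Sum>i<K. \<bar>g m i\<bar> powr q) \<longlonglongrightarrow> (\<Sum>i<K. \<bar>h i\<bar> powr q)"
      using q by (intro tendsto_sum tendsto_powr' tendsto_rabs lim) auto
    show "\<forall>\<^sub>F m in sequentially. (\<Sum>i<K. \<bar>g m i\<bar> powr q) \<le> C powr q"
      using bounded q by (auto simp: lp_bounded_def eventually_sequentially)
  qed simp
  then show ?thesis using q bounded[of N] by (auto simp: lp_bounded_def)
qed

lemma lp_member_finite_support:
  assumes "\<And>i. m < i \<Longrightarrow> f i = 0"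
  shows "lp_member p f"
proof (cases "p = \<infinity>")
  case True
  have "range (\<lambda>i. \<bar>f i\<bar>) \<subseteq> insert 0 ((\<lambda>i. \<bar>f i\<bar>) ` {..m})"
  proof (rule image_subsetI)
    fix i show "\<bar>f i\<bar> \<in> insert 0 ((\<lambda>i. \<bar>f i\<bar>) ` {..m})"
      using assms[of i] by (cases "i \<le> m") auto
  qed
  then have "bounded (range (\<lambda>i. \<bar>f i\<bar>))"
    by (rule bounded_subset[OF finite_imp_bounded, rotated]) simp
  then show ?thesis using True by (simp add: lp_member_def)
next
  case False
  have "summable (\<lambda>i. \<bar>f i\<bar> powr real_of_ereal p)"
    by (rule summable_finite[of "{..m}"]) (use assms in auto)
  then show ?thesis using False by (simp add: lp_member_def)
qed

lemma lp_add:
  assumes "1 \<le> p" "lp_member p f" "lp_member p g"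
  shows "lp_member p (\<lambda>i. f i + g i) \<and> lp_norm p (\<lambda>i. f i + g i) \<le> lp_norm p f + lp_norm p g"
  using assms by (intro lp_bounded_imp_lp lp_bounded_add lp_bounded_lp_norm)

lemma lp_diff:
  assumes p: "1 \<le> p" and "lp_member p f" "lp_member p g"
  shows "lp_member p (\<lambda>i. f i - g i) \<and> lp_norm p (\<lambda>i. f i - g i) \<le> lp_norm p f + lp_norm p g"
proof -
  have "lp_bounded p (lp_norm p f + \<bar>-1\<bar> * lp_norm p g) (\<lambda>i. f i + (-1) * g i)"
    using assms by (intro lp_bounded_add lp_bounded_scale lp_bounded_lp_norm)
  then show ?thesis using lp_bounded_imp_lp[OF p] by simp
qed

lemma lp_scale:
  assumes p: "1 \<le> p" and f: "lp_member p f"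
  shows "lp_member p (\<lambda>i. c * f i) \<and> lp_norm p (\<lambda>i. c * f i) = \<bar>c\<bar> * lp_norm p f"
proof -
  have cf: "lp_member p (\<lambda>i. c * f i)" "lp_norm p (\<lambda>i. c * f i) \<le> \<bar>c\<bar> * lp_norm p f"
    using lp_bounded_imp_lp[OF p lp_bounded_scale[OF p lp_bounded_lp_norm[OF p f]]] by auto
  have "\<bar>c\<bar> * lp_norm p f \<le> lp_norm p (\<lambda>i. c * f i)"
  proof (cases "c = 0")
    case True then show ?thesis using lp_norm_nonneg[OF p cf(1)] by simp
  next
    case False
    have "lp_norm p (\<lambda>i. (1 / c) * (c * f i)) \<le> \<bar>1 / c\<bar> * lp_norm p (\<lambda>i. c * f i)"
      using lp_bounded_imp_lp[OF p lp_bounded_scale[OF p lp_bounded_lp_norm[OF p cf(1)]]] by blast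
    then show ?thesis using False by (simp add: field_simps)
  qed
  then show ?thesis using cf by simp
qed

lemma abs_le_lp_norm: "1 \<le> p \<Longrightarrow> lp_member p f \<Longrightarrow> \<bar>f i\<bar> \<le> lp_norm p f"
  using abs_le_lp_bounded lp_bounded_lp_norm by blast

lemma lp_mono:
  assumes "1 \<le> p" "lp_member p g" "\<And>i. \<bar>f i\<bar> \<le> \<bar>g i\<bar>"
  shows "lp_member p f \<and> lp_norm p f \<le> lp_norm p g"
  using assms by (intro lp_bounded_imp_lp lp_bounded_mono[OF _ lp_bounded_lp_norm])

lemma lp_shift:
  assumes "1 \<le> p" "lp_member p f" "f 0 = 0"
  shows "lp_member p (\<lambda>i. f (i - j)) \<and> lp_norm p (\<lambda>i. f (i - j)) \<le> lp_norm p f"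
  using assms by (intro lp_bounded_imp_lp lp_bounded_shift lp_bounded_lp_norm)

lemma lp_sum:
  assumes p: "1 \<le> p" and F: "\<And>j. j \<in> J \<Longrightarrow> lp_member p (F j)"
  shows "lp_member p (\<lambda>i. \<Sum>j\<in>J. F j i) \<and> lp_norm p (\<lambda>i. \<Sum>j\<in>J. F j i) \<le> (\<Sum>j\<in>J. lp_norm p (F j))"
proof -
  have "lp_bounded p (\<Sum>j\<in>J. lp_norm p (F j)) (\<lambda>i. \<Sum>j\<in>J. F j i)"
    using F
  proof (induction J rule: infinite_finite_induct)
    case (insert j J)
    then show ?case by (simp add: lp_bounded_add lp_bounded_lp_norm p)
  qed (simp_all add: lp_bounded_def)
  then show ?thesis by (rule lp_bounded_imp_lp[OF p])
qed

lemma lp_weighted_shift_sum: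
  assumes p: "1 \<le> p" and X: "lp_member p X" "X 0 = 0"
  shows "lp_member p (\<lambda>i. \<Sum>j\<in>J. \<bar>c j\<bar> * X (i - j))
    \<and> lp_norm p (\<lambda>i. \<Sum>j\<in>J. \<bar>c j\<bar> * X (i - j)) \<le> (\<Sum>j\<in>J. \<bar>c j\<bar>) * lp_norm p X"
proof -
  have shift: "lp_member p (\<lambda>i. \<bar>c j\<bar> * X (i - j))
      \<and> lp_norm p (\<lambda>i. \<bar>c j\<bar> * X (i - j)) \<le> \<bar>c j\<bar> * lp_norm p X" for j
    using lp_shift[OF p X, of j] lp_scale[OF p, of "\<lambda>i. X (i - j)" "\<bar>c j\<bar>"]
    by (auto intro: mult_left_mono)
  have "(\<Sum>j\<in>J. lp_norm p (\<lambda>i. \<bar>c j\<bar> * X (i - j))) \<le> (\<Sum>j\<in>J. \<bar>c j\<bar> * lp_norm p X)"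
    using shift by (intro sum_mono) blast
  moreover have "lp_member p (\<lambda>i. \<Sum>j\<in>J. \<bar>c j\<bar> * X (i - j))
      \<and> lp_norm p (\<lambda>i. \<Sum>j\<in>J. \<bar>c j\<bar> * X (i - j)) \<le> (\<Sum>j\<in>J. lp_norm p (\<lambda>i. \<bar>c j\<bar> * X (i - j)))"
    by (rule lp_sum[OF p]) (use shift in blast)
  ultimately show ?thesis by (auto simp: sum_distrib_right)
qed

section \<open>Completeness and perturbed scaling\<close>

lemma lp_bounded_telescoping:
  assumes p: "1 \<le> p" and g: "\<And>n. lp_member p (g n)" and "n \<le> m"
  shows "lp_bounded p (\<Sum>k\<in>{n..<m}. lp_norm p (\<lambda>i. g (Suc k) i - g k i)) (\<lambda>i. g m i - g n i)"
  using \<open>n \<le> m\<close>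
proof (induction m rule: dec_induct)
  case base
  then show ?case by (simp add: lp_bounded_def)
next
  case (step m)
  have "lp_bounded p (lp_norm p (\<lambda>i. g (Suc m) i - g m i) + (\<Sum>k\<in>{n..<m}. lp_norm p (\<lambda>i. g (Suc k) i - g k i)))
      (\<lambda>i. (g (Suc m) i - g m i) + (g m i - g n i))"
    using lp_diff[OF p g g] step.IH by (intro lp_bounded_add lp_bounded_lp_norm p) auto
  then show ?case using step.hyps by (simp add: add.commute)
qed

lemma lp_coordinate_convergent:
  assumes p: "1 \<le> p" and g: "\<And>n. lp_member p (g n)"
    and summable: "summable (\<lambda>n. lp_norm p (\<lambda>i. g (Suc n) i - g n i))"
  shows "convergent (\<lambda>n. g n i)"
proof -
  have "norm (g (Suc k) i - g k i) \<le> lp_norm p (\<lambda>i. g (Suc k) i - g k i)" for k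
    using abs_le_lp_norm[OF p conjunct1[OF lp_diff[OF p g g]]] by simp
  then have "summable (\<lambda>k. g (Suc k) i - g k i)"
    by (rule summable_comparison_test'[OF summable])
  then have "(\<lambda>n. g 0 i + (\<Sum>k<n. g (Suc k) i - g k i)) \<longlonglongrightarrow> g 0 i + (\<Sum>k. g (Suc k) i - g k i)"
    by (intro tendsto_add tendsto_const summable_LIMSEQ)
  then show ?thesis using sum_lessThan_telescope[of "\<lambda>k. g k i"] by (auto simp: convergent_def)
qed

lemma lp_complete:
  assumes p: "1 \<le> p" and g: "\<And>n. lp_member p (g n)"
    and summable: "summable (\<lambda>n. lp_norm p (\<lambda>i. g (Suc n) i - g n i))"
  shows "\<exists>y. lp_member p y \<and> (\<lambda>n. lp_norm p (\<lambda>i. g n i - y i)) \<longlonglongrightarrow> 0"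
proof -
  define d where "d n = lp_norm p (\<lambda>i. g (Suc n) i - g n i)" for n
  define T where "T n = (\<Sum>k. d (k + n))" for n
  have d_nonneg: "0 \<le> d n" for n
    unfolding d_def using lp_diff[OF p g g] lp_norm_nonneg[OF p] by blast
  have d_summable: "summable d" using summable by (simp add: d_def[abs_def])
  have T: "T \<longlonglongrightarrow> 0" unfolding T_def by (rule suminf_exist_split2[OF d_summable])
  have sum_le_T: "(\<Sum>k\<in>{n..<m}. d k) \<le> T n" if "n \<le> m" for m n
  proof -
    have "(\<Sum>k\<in>{n..<m}. d k) = (\<Sum>k<m - n. d (k + n))"
      using sum.shift_bounds_nat_ivl[of d 0 n "m - n"] that by (simp add: atLeast0LessThan)
    also have "\<dots> \<le> T n" unfolding T_def
      using d_nonneg by (intro sum_le_suminf summable_ignore_initial_segment[OF d_summable]) auto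
    finally show ?thesis .
  qed
  define y where "y i = lim (\<lambda>n. g n i)" for i
  have lim: "(\<lambda>n. g n i) \<longlonglongrightarrow> y i" for i
    unfolding y_def using lp_coordinate_convergent[OF p g summable] by (simp add: convergent_LIMSEQ_iff)
  have tail: "lp_bounded p (T n) (\<lambda>i. g n i - y i)" for n
  proof (rule lp_bounded_limit[OF p])
    show "(\<lambda>m. g n i - g m i) \<longlonglongrightarrow> g n i - y i" for i by (intro tendsto_intros lim)
    show "lp_bounded p (T n) (\<lambda>i. g n i - g m i)" if "n \<le> m" for m
    proof (rule lp_bounded_mono[OF p _ abs_minus_commute[THEN eq_refl]])
      have "lp_member p (\<lambda>i. g m i - g n i) \<and> lp_norm p (\<lambda>i. g m i - g n i) \<le> (\<Sum>k\<in>{n..<m}. d k)"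
        using lp_bounded_imp_lp[OF p lp_bounded_telescoping[OF p g that]] by (simp add: d_def)
      then show "lp_bounded p (T n) (\<lambda>i. g m i - g n i)"
        using sum_le_T[OF that] by (intro lp_bounded_if_lp_norm_le[OF p]) auto
    qed
  qed
  have "lp_member p (\<lambda>i. g 0 i - (g 0 i - y i))"
    using lp_diff[OF p g lp_bounded_imp_lp[OF p tail, THEN conjunct1]] by blast
  then have y: "lp_member p y" by simp
  have "0 \<le> lp_norm p (\<lambda>i. g n i - y i)" "lp_norm p (\<lambda>i. g n i - y i) \<le> T n" for n
    using lp_bounded_imp_lp[OF p tail] lp_norm_nonneg[OF p] by blast+
  then have "(\<lambda>n. lp_norm p (\<lambda>i. g n i - y i)) \<longlonglongrightarrow> 0"
    by (intro tendsto_sandwich[OF always_eventually always_eventually tendsto_const T]) simp_all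
  with y show ?thesis by blast
qed

lemma lp_tendsto_scale:
  assumes p: "1 \<le> p" and Z: "\<And>n. lp_member p (Z n)" and y: "lp_member p y"
    and c: "c \<longlonglongrightarrow> c0" and Zy: "(\<lambda>n. lp_norm p (\<lambda>i. Z n i - y i)) \<longlonglongrightarrow> 0"
  shows "(\<lambda>n. lp_norm p (\<lambda>i. c n * Z n i - c0 * y i)) \<longlonglongrightarrow> 0"
proof (rule tendsto_sandwich[OF always_eventually always_eventually tendsto_const])
  have diff: "lp_member p (\<lambda>i. Z n i - y i)" for n using lp_diff[OF p Z y] by blast
  have "lp_norm p (\<lambda>i. c n * (Z n i - y i) + (c n - c0) * y i)
      \<le> lp_norm p (\<lambda>i. c n * (Z n i - y i)) + lp_norm p (\<lambda>i. (c n - c0) * y i)" for n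
    using lp_add[OF p lp_scale[OF p diff, THEN conjunct1] lp_scale[OF p y, THEN conjunct1]] by blast
  moreover have "(\<lambda>i. c n * (Z n i - y i) + (c n - c0) * y i) = (\<lambda>i. c n * Z n i - c0 * y i)" for n
    by (simp add: algebra_simps)
  ultimately show "\<forall>n. lp_norm p (\<lambda>i. c n * Z n i - c0 * y i)
      \<le> \<bar>c n\<bar> * lp_norm p (\<lambda>i. Z n i - y i) + \<bar>c n - c0\<bar> * lp_norm p y"
    using lp_scale[OF p diff] lp_scale[OF p y] by metis
  show "\<forall>n. 0 \<le> lp_norm p (\<lambda>i. c n * Z n i - c0 * y i)"
    using lp_diff[OF p lp_scale[OF p Z, THEN conjunct1] lp_scale[OF p y, THEN conjunct1]]
      lp_norm_nonneg[OF p] by blast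
  have "(\<lambda>n. \<bar>c n\<bar> * lp_norm p (\<lambda>i. Z n i - y i) + \<bar>c n - c0\<bar> * lp_norm p y)
      \<longlonglongrightarrow> \<bar>c0\<bar> * 0 + \<bar>c0 - c0\<bar> * lp_norm p y"
    by (intro tendsto_intros c Zy)
  then show "(\<lambda>n. \<bar>c n\<bar> * lp_norm p (\<lambda>i. Z n i - y i) + \<bar>c n - c0\<bar> * lp_norm p y) \<longlonglongrightarrow> 0"
    by simp
qed

lemma discrete_gronwall_bounded:
  fixes u \<rho> \<gamma> :: "nat \<Rightarrow> real"
  assumes u: "\<And>k. 0 \<le> u k" and step: "\<And>k. u (Suc k) \<le> u k * (1 + \<rho> k) + \<gamma> k"
    and \<rho>: "\<And>k. 0 \<le> \<rho> k" "summable \<rho>" and \<gamma>: "\<And>k. 0 \<le> \<gamma> k" "summable \<gamma>"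
  shows "\<exists>M. \<forall>k. u k \<le> M"
proof -
  have partial: "u k \<le> (u 0 + (\<Sum>j<k. \<gamma> j)) * exp (\<Sum>j<k. \<rho> j)" for k
  proof (induction k)
    case (Suc k)
    let ?G = "u 0 + (\<Sum>j<k. \<gamma> j)" and ?R = "\<Sum>j<k. \<rho> j"
    have "u (Suc k) \<le> ?G * exp ?R * (1 + \<rho> k) + \<gamma> k"
      using step[of k] mult_right_mono[OF Suc, of "1 + \<rho> k"] \<rho>(1)[of k] by linarith
    also have "\<dots> \<le> ?G * exp ?R * exp (\<rho> k) + \<gamma> k * exp (?R + \<rho> k)"
    proof (intro add_mono mult_left_mono)
      show "1 + \<rho> k \<le> exp (\<rho> k)" by (rule exp_ge_add_one_self)
      have "1 \<le> exp (?R + \<rho> k)" using \<rho>(1) by (simp add: sum_nonneg)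
      then show "\<gamma> k \<le> \<gamma> k * exp (?R + \<rho> k)"
        using mult_left_mono[of 1 _ "\<gamma> k"] \<gamma>(1)[of k] by simp
    qed (use u \<gamma>(1) in \<open>auto intro!: mult_nonneg_nonneg add_nonneg_nonneg sum_nonneg\<close>)
    also have "\<dots> = (u 0 + (\<Sum>j<Suc k. \<gamma> j)) * exp (\<Sum>j<Suc k. \<rho> j)"
      by (simp add: exp_add algebra_simps)
    finally show ?case .
  qed simp
  have "(u 0 + (\<Sum>j<k. \<gamma> j)) * exp (\<Sum>j<k. \<rho> j) \<le> (u 0 + suminf \<gamma>) * exp (suminf \<rho>)" for k
    using u[of 0] \<rho> \<gamma> suminf_nonneg[OF \<gamma>(2)]
    by (intro mult_mono add_left_mono sum_le_suminf) (auto intro: sum_le_suminf)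
  then show ?thesis using partial by (meson order_trans)
qed

lemma lp_convergent_if_increments_bounded:
  assumes p: "1 \<le> p" and Z: "\<And>k. lp_member p (Z k)"
    and increment: "\<And>k. lp_norm p (\<lambda>i. Z (Suc k) i - Z k i) \<le> \<rho> k * lp_norm p (Z k) + \<gamma> k"
    and \<rho>: "\<And>k. 0 \<le> \<rho> k" "summable \<rho>" and \<gamma>: "\<And>k. 0 \<le> \<gamma> k" "summable \<gamma>"
  shows "\<exists>y. lp_member p y \<and> (\<lambda>k. lp_norm p (\<lambda>i. Z k i - y i)) \<longlonglongrightarrow> 0"
proof -
  have diff: "lp_member p (\<lambda>i. Z (Suc k) i - Z k i)" for k using lp_diff[OF p Z Z] by blast
  have growth: "lp_norm p (Z (Suc k)) \<le> lp_norm p (Z k) * (1 + \<rho> k) + \<gamma> k" for k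
  proof -
    have "lp_norm p (\<lambda>i. Z k i + (Z (Suc k) i - Z k i))
        \<le> lp_norm p (Z k) + lp_norm p (\<lambda>i. Z (Suc k) i - Z k i)"
      using lp_add[OF p Z diff] by blast
    then show ?thesis using increment[of k] by (simp add: algebra_simps)
  qed
  then obtain M where M: "\<And>k. lp_norm p (Z k) \<le> M"
    using discrete_gronwall_bounded[where u = "\<lambda>k. lp_norm p (Z k)", OF lp_norm_nonneg[OF p Z] growth \<rho> \<gamma>]
    by blast
  have "summable (\<lambda>k. lp_norm p (\<lambda>i. Z (Suc k) i - Z k i))"
  proof (rule summable_comparison_test'[where g = "\<lambda>k. \<rho> k * M + \<gamma> k"])
    show "summable (\<lambda>k. \<rho> k * M + \<gamma> k)" by (intro summable_add summable_mult2 \<rho> \<gamma>)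
    show "norm (lp_norm p (\<lambda>i. Z (Suc k) i - Z k i)) \<le> \<rho> k * M + \<gamma> k" for k
      using increment[of k] mult_left_mono[OF M[of k] \<rho>(1)[of k]] lp_norm_nonneg[OF p diff] by simp
  qed
  then show ?thesis by (rule lp_complete[OF p Z])
qed

text \<open>Normalising by \<open>P\<close> turns the near-scaling \<open>X (n + 1) \<approx> a n X n\<close> into an increment
  controlled by \<open>\<sigma> n / \<bar>a n\<bar>\<close>, because \<open>\<bar>P n\<bar> / \<bar>P (n + 1)\<bar> = 1 / \<bar>a n\<bar>\<close>.\<close>
lemma lp_norm_normalised_increment:
  assumes p: "1 \<le> p" and X: "\<And>n. lp_member p (X n)"
    and P_Suc: "P (Suc n) = a n * P n" and P: "P n \<noteq> 0" "P (Suc n) \<noteq> 0"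
    and step: "lp_norm p (\<lambda>i. X (Suc n) i - a n * X n i) \<le> \<sigma> * lp_norm p (X n) + \<beta>"
  shows "lp_norm p (\<lambda>i. inverse (P (Suc n)) * X (Suc n) i - inverse (P n) * X n i)
    \<le> \<sigma> / \<bar>a n\<bar> * lp_norm p (\<lambda>i. inverse (P n) * X n i) + \<beta> / \<bar>P (Suc n)\<bar>"
proof -
  have a: "a n \<noteq> 0" using P_Suc P by auto
  have E: "lp_member p (\<lambda>i. X (Suc n) i - a n * X n i)"
    using lp_diff[OF p X lp_scale[OF p X, THEN conjunct1]] by blast
  have "(\<lambda>i. inverse (P (Suc n)) * X (Suc n) i - inverse (P n) * X n i)
      = (\<lambda>i. inverse (P (Suc n)) * (X (Suc n) i - a n * X n i))"
    using P a by (auto simp: P_Suc field_simps)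
  then have "lp_norm p (\<lambda>i. inverse (P (Suc n)) * X (Suc n) i - inverse (P n) * X n i)
      = inverse \<bar>P (Suc n)\<bar> * lp_norm p (\<lambda>i. X (Suc n) i - a n * X n i)"
    using lp_scale[OF p E] by simp
  also have "\<dots> \<le> inverse \<bar>P (Suc n)\<bar> * (\<sigma> * lp_norm p (X n) + \<beta>)"
    using step by (simp add: mult_left_mono)
  also have "\<dots> = \<sigma> / \<bar>a n\<bar> * (inverse \<bar>P n\<bar> * lp_norm p (X n)) + \<beta> / \<bar>P (Suc n)\<bar>"
    using a P by (simp add: P_Suc abs_mult field_simps)
  finally show ?thesis using lp_scale[OF p X, of "inverse (P n)" n] by simp
qed

lemma LIMSEQ_factor_of_prod_nonzero:
  fixes a :: "nat \<Rightarrow> 'a::real_normed_field"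
  assumes "(\<lambda>n. \<Prod>k<n. a k) \<longlonglongrightarrow> L" "L \<noteq> 0"
  shows "a \<longlonglongrightarrow> 1"
proof -
  let ?P = "\<lambda>n. \<Prod>k<n. a k"
  have "(\<lambda>n. ?P (Suc n) / ?P n) \<longlonglongrightarrow> L / L"
    using assms by (intro tendsto_divide LIMSEQ_Suc)
  moreover have "eventually (\<lambda>n. ?P (Suc n) / ?P n = a n) sequentially"
    using tendsto_imp_eventually_ne[OF assms] by eventually_elim simp
  ultimately show ?thesis using assms(2) by (simp add: Lim_transform_eventually)
qed

lemma lp_convergent_if_perturbed_scaling:
  fixes X :: "nat \<Rightarrow> nat \<Rightarrow> real" and a \<sigma> \<beta> :: "nat \<Rightarrow> real"
  assumes p: "1 \<le> p" and X: "\<And>n. lp_member p (X n)"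
    and prod: "(\<lambda>n. \<Prod>k<n. a k) \<longlonglongrightarrow> L" "L \<noteq> 0"
    and step: "\<And>n. N \<le> n \<Longrightarrow>
      lp_norm p (\<lambda>i. X (Suc n) i - a n * X n i) \<le> \<sigma> n * lp_norm p (X n) + \<beta> n"
    and \<sigma>: "\<And>n. 0 \<le> \<sigma> n" "summable (\<lambda>n. \<sigma> n / \<bar>a n\<bar>)"
    and \<beta>: "\<And>n. 0 \<le> \<beta> n" "summable \<beta>"
  shows "\<exists>y. lp_member p y \<and> (\<lambda>n. lp_norm p (\<lambda>i. X n i - y i)) \<longlonglongrightarrow> 0"
proof -
  define P where "P n = (\<Prod>k<n. a k)" for n
  have "eventually (\<lambda>n. \<bar>L\<bar> / 2 < \<bar>P n\<bar>) sequentially"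
    unfolding P_def using prod by (intro order_tendstoD(1)[OF tendsto_rabs[OF prod(1)]]) auto
  then obtain N0 where N0: "N \<le> N0" and P_large: "\<And>n. N0 \<le> n \<Longrightarrow> \<bar>L\<bar> / 2 < \<bar>P n\<bar>"
    unfolding eventually_sequentially by (metis max.cobounded1 max.cobounded2 order_trans)
  have P_Suc: "P (Suc n) = a n * P n" for n by (simp add: P_def)
  define Z where "Z k i = inverse (P (k + N0)) * X (k + N0) i" for k i
  have Z: "lp_member p (Z k)" for k unfolding Z_def using lp_scale[OF p X] by blast
  have increment: "lp_norm p (\<lambda>i. Z (Suc k) i - Z k i)
      \<le> \<sigma> (k + N0) / \<bar>a (k + N0)\<bar> * lp_norm p (Z k) + 2 / \<bar>L\<bar> * \<beta> (k + N0)" for k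
  proof -
    have P: "\<bar>L\<bar> / 2 < \<bar>P (k + N0)\<bar>" "\<bar>L\<bar> / 2 < \<bar>P (Suc (k + N0))\<bar>" using P_large by auto
    have "\<beta> (k + N0) / \<bar>P (Suc (k + N0))\<bar> \<le> \<beta> (k + N0) / (\<bar>L\<bar> / 2)"
      using P prod(2) \<beta>(1) by (intro divide_left_mono) auto
    then have "\<beta> (k + N0) / \<bar>P (Suc (k + N0))\<bar> \<le> 2 / \<bar>L\<bar> * \<beta> (k + N0)" by (simp add: mult.commute)
    moreover have "lp_norm p (\<lambda>i. Z (Suc k) i - Z k i) \<le> \<sigma> (k + N0) / \<bar>a (k + N0)\<bar> * lp_norm p (Z k)
        + \<beta> (k + N0) / \<bar>P (Suc (k + N0))\<bar>"
      unfolding Z_def add_Suc using P prod(2) N0 step[of "k + N0"]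
      by (intro lp_norm_normalised_increment[where P = P and a = a, OF p X P_Suc]) auto
    ultimately show ?thesis by linarith
  qed
  obtain y0 where y0: "lp_member p y0" "(\<lambda>k. lp_norm p (\<lambda>i. Z k i - y0 i)) \<longlonglongrightarrow> 0"
  proof (rule lp_convergent_if_increments_bounded[where \<rho> = "\<lambda>k. \<sigma> (k + N0) / \<bar>a (k + N0)\<bar>",
        OF p Z increment, THEN exE])
    show "summable (\<lambda>k. \<sigma> (k + N0) / \<bar>a (k + N0)\<bar>)" "summable (\<lambda>k. 2 / \<bar>L\<bar> * \<beta> (k + N0))"
      by (intro summable_mult summable_ignore_initial_segment \<sigma>(2) \<beta>(2))+
  qed (use \<sigma>(1) \<beta>(1) in auto)
  have "X (k + N0) = (\<lambda>i. P (k + N0) * Z k i)" for k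
    using P_large[of "k + N0"] prod(2) by (auto simp: Z_def)
  moreover have "(\<lambda>k. lp_norm p (\<lambda>i. P (k + N0) * Z k i - L * y0 i)) \<longlonglongrightarrow> 0"
    using lp_tendsto_scale[OF p Z y0(1) LIMSEQ_ignore_initial_segment[OF prod(1)] y0(2)]
    by (simp add: P_def)
  ultimately have "(\<lambda>k. lp_norm p (\<lambda>i. X (k + N0) i - L * y0 i)) \<longlonglongrightarrow> 0"
    by simp
  then have "(\<lambda>n. lp_norm p (\<lambda>i. X n i - L * y0 i)) \<longlonglongrightarrow> 0"
    by (rule LIMSEQ_offset)
  then show ?thesis using lp_scale[OF p y0(1)] by blast
qed

section \<open>The convolutional network\<close>

lemma relu_add_nonneg_diff: "0 \<le> a \<Longrightarrow> \<bar>relu (a + r) - a\<bar> \<le> \<bar>r\<bar>"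
  by (simp add: relu_def)

lemma cnn_eq_0:
  assumes "i = 0 \<or> width d s n < i"
  shows "cnn d s w b x n i = 0"
  using assms by (cases n) (auto simp: restrict_vec_def)

lemma cnn_nonneg:
  assumes "\<forall>i\<in>{1..d}. 0 \<le> x i"
  shows "0 \<le> cnn d s w b x n i"
  using assms by (cases n) (auto simp: restrict_vec_def relu_def)

lemma lp_member_cnn: "lp_member p (cnn d s w b x n)"
  by (rule lp_member_finite_support[where m = "width d s n"]) (simp add: cnn_eq_0)

lemma conv_eq_sum_atMost:
  assumes f: "\<And>i. i = 0 \<or> m < i \<Longrightarrow> f i = 0" and i: "1 \<le> i" "i \<le> m + s"
  shows "conv m f s w i = (\<Sum>j\<le>s. w j * f (i - j))"
proof -
  have "conv m f s w i = (\<Sum>j\<in>{i - m .. min (i - 1) s}. w j * f (i - j))"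
    using i by (simp add: conv_def)
  also have "\<dots> = (\<Sum>j\<le>s. w j * f (i - j))"
  proof (rule sum.mono_neutral_left)
    show "\<forall>j\<in>{..s} - {i - m..min (i - 1) s}. w j * f (i - j) = 0"
    proof
      fix j assume "j \<in> {..s} - {i - m..min (i - 1) s}"
      then have "i - j = 0 \<or> m < i - j" by auto
      then show "w j * f (i - j) = 0" using f by simp
    qed
  qed auto
  finally show ?thesis .
qed

text \<open>This is the only place where \<open>x \<ge> 0\<close> is used: it makes every layer nonnegative, so the
  ReLU is the identity on \<open>w\<^sub>0\<close> times the previous layer.\<close>
lemma cnn_Suc_near_scaling:
  assumes x: "\<forall>i\<in>{1..d}. 0 \<le> x i" and w0: "0 < w (Suc n) 0"
  shows "\<bar>cnn d s w b x (Suc n) i - w (Suc n) 0 * cnn d s w b x n i\<bar>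
    \<le> (\<Sum>j\<in>{1..s (Suc n)}. \<bar>w (Suc n) j\<bar> * cnn d s w b x n (i - j))
      + \<bar>restrict_vec (width d s (Suc n)) (b (Suc n)) i\<bar>"
proof -
  let ?X = "cnn d s w b x n" and ?J = "{1..s (Suc n)}"
  have X: "0 \<le> ?X i" for i using cnn_nonneg[OF x] .
  show ?thesis
  proof (cases "1 \<le> i \<and> i \<le> width d s (Suc n)")
    case True
    have "{..s (Suc n)} = insert 0 ?J" by auto
    then have "conv (width d s n) ?X (s (Suc n)) (w (Suc n)) i
        = w (Suc n) 0 * ?X i + (\<Sum>j\<in>?J. w (Suc n) j * ?X (i - j))"
      using True by (subst conv_eq_sum_atMost) (auto simp: cnn_eq_0)
    then have "\<bar>cnn d s w b x (Suc n) i - w (Suc n) 0 * ?X i\<bar>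
        = \<bar>relu (w (Suc n) 0 * ?X i + ((\<Sum>j\<in>?J. w (Suc n) j * ?X (i - j)) + b (Suc n) i))
            - w (Suc n) 0 * ?X i\<bar>"
      using True by (simp add: restrict_vec_def add.assoc)
    also have "\<dots> \<le> \<bar>(\<Sum>j\<in>?J. w (Suc n) j * ?X (i - j)) + b (Suc n) i\<bar>"
      using w0 X by (intro relu_add_nonneg_diff) simp
    also have "\<dots> \<le> (\<Sum>j\<in>?J. \<bar>w (Suc n) j\<bar> * ?X (i - j)) + \<bar>b (Suc n) i\<bar>"
      using sum_abs[of "\<lambda>j. w (Suc n) j * ?X (i - j)" ?J] X
      by (intro order_trans[OF abs_triangle_ineq] add_right_mono) (simp add: abs_mult)
    finally show ?thesis using True by (simp add: restrict_vec_def)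
  next
    case False
    have "cnn d s w b x (Suc n) i = 0" by (rule cnn_eq_0) (use False in auto)
    moreover have "?X i = 0" by (rule cnn_eq_0) (use False in auto)
    ultimately show ?thesis using X by (auto intro!: add_nonneg_nonneg sum_nonneg mult_nonneg_nonneg)
  qed
qed

lemma cnn_Suc_near_scaling_lp_norm:
  assumes p: "1 \<le> p" and x: "\<forall>i\<in>{1..d}. 0 \<le> x i" and w0: "0 < w (Suc n) 0"
  shows "lp_norm p (\<lambda>i. cnn d s w b x (Suc n) i - w (Suc n) 0 * cnn d s w b x n i)
    \<le> (\<Sum>j\<in>{1..s (Suc n)}. \<bar>w (Suc n) j\<bar>) * lp_norm p (cnn d s w b x n)
      + lp_norm p (restrict_vec (width d s (Suc n)) (b (Suc n)))"
proof -
  let ?X = "cnn d s w b x n" and ?J = "{1..s (Suc n)}"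
  let ?r = "restrict_vec (width d s (Suc n)) (b (Suc n))"
  have X: "lp_member p ?X" by (rule lp_member_cnn)
  have r: "lp_member p ?r" by (rule lp_member_finite_support[where m = "width d s (Suc n)"])
      (simp add: restrict_vec_def)
  have taps: "lp_member p (\<lambda>i. \<Sum>j\<in>?J. \<bar>w (Suc n) j\<bar> * ?X (i - j))
      \<and> lp_norm p (\<lambda>i. \<Sum>j\<in>?J. \<bar>w (Suc n) j\<bar> * ?X (i - j)) \<le> (\<Sum>j\<in>?J. \<bar>w (Suc n) j\<bar>) * lp_norm p ?X"
    by (rule lp_weighted_shift_sum[OF p X cnn_eq_0]) simp
  have abs_r: "lp_member p (\<lambda>i. \<bar>?r i\<bar>) \<and> lp_norm p (\<lambda>i. \<bar>?r i\<bar>) \<le> lp_norm p ?r"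
    by (rule lp_mono[OF p r]) simp
  define G where "G i = (\<Sum>j\<in>?J. \<bar>w (Suc n) j\<bar> * ?X (i - j)) + \<bar>?r i\<bar>" for i
  have G: "lp_member p G \<and> lp_norm p G \<le> (\<Sum>j\<in>?J. \<bar>w (Suc n) j\<bar>) * lp_norm p ?X + lp_norm p ?r"
    using lp_add[OF p taps[THEN conjunct1] abs_r[THEN conjunct1]] taps abs_r
    unfolding G_def by linarith
  have "\<bar>cnn d s w b x (Suc n) i - w (Suc n) 0 * ?X i\<bar> \<le> \<bar>G i\<bar>" for i
    using cnn_Suc_near_scaling[where b = b and s = s and i = i and n = n and w = w, OF x w0]
    unfolding G_def by linarith
  then have "lp_norm p (\<lambda>i. cnn d s w b x (Suc n) i - w (Suc n) 0 * ?X i) \<le> lp_norm p G"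
    by (rule lp_mono[OF p G[THEN conjunct1], THEN conjunct2])
  with G show ?thesis by linarith
qed

theorem theorem6p2:
  fixes p :: ereal and d :: nat and s :: "nat \<Rightarrow> nat"
    and w :: "nat \<Rightarrow> nat \<Rightarrow> real" and b :: "nat \<Rightarrow> nat \<Rightarrow> real"
  assumes hp: "1 \<le> p"
    and hb: "summable (\<lambda>n. lp_norm p (restrict_vec (width d s (Suc n)) (b (Suc n))))"
    and hprod: "\<exists>L. L \<noteq> 0 \<and> (\<lambda>N. \<Prod>n\<in>{1..N}. w n 0) \<longlonglongrightarrow> L"
    and hw: "summable (\<lambda>n. (\<Sum>j\<in>{1..s (Suc n)}. \<bar>w (Suc n) j\<bar>) / \<bar>w (Suc n) 0\<bar>)"
  shows "\<forall>x :: nat \<Rightarrow> real. (\<forall>i\<in>{1..d}. 0 \<le> x i \<and> x i \<le> 1) \<longrightarrow>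
           (\<exists>y. lp_member p y \<and>
                (\<lambda>n. lp_norm p (\<lambda>i. cnn d s w b x n i - y i)) \<longlonglongrightarrow> 0)"
proof (intro allI impI)
  fix x :: "nat \<Rightarrow> real"
  assume "\<forall>i\<in>{1..d}. 0 \<le> x i \<and> x i \<le> 1"
  then have x: "\<forall>i\<in>{1..d}. 0 \<le> x i" by blast
  obtain L where L: "(\<lambda>n. \<Prod>k<n. w (Suc k) 0) \<longlonglongrightarrow> L" "L \<noteq> 0"
    using hprod by (auto simp: prod.atLeast1_atMost_eq)
  then have "(\<lambda>n. w (Suc n) 0) \<longlonglongrightarrow> 1" by (rule LIMSEQ_factor_of_prod_nonzero)
  then have "eventually (\<lambda>n. 0 < w (Suc n) 0) sequentially" by (rule order_tendstoD) simp
  then obtain N where N: "\<And>n. N \<le> n \<Longrightarrow> 0 < w (Suc n) 0"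
    unfolding eventually_sequentially by blast
  have bias: "0 \<le> lp_norm p (restrict_vec (width d s (Suc n)) (b (Suc n)))" for n
    by (intro lp_norm_nonneg[OF hp] lp_member_finite_support[where m = "width d s (Suc n)"])
      (simp add: restrict_vec_def)
  show "\<exists>y. lp_member p y \<and> (\<lambda>n. lp_norm p (\<lambda>i. cnn d s w b x n i - y i)) \<longlonglongrightarrow> 0"
  proof (rule lp_convergent_if_perturbed_scaling[OF hp lp_member_cnn L])
    show "lp_norm p (\<lambda>i. cnn d s w b x (Suc n) i - w (Suc n) 0 * cnn d s w b x n i)
        \<le> (\<Sum>j\<in>{1..s (Suc n)}. \<bar>w (Suc n) j\<bar>) * lp_norm p (cnn d s w b x n)
          + lp_norm p (restrict_vec (width d s (Suc n)) (b (Suc n)))" if "N \<le> n" for n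
      by (rule cnn_Suc_near_scaling_lp_norm[OF hp x], rule N[OF that])
  qed (use hw hb bias in \<open>auto intro: sum_nonneg\<close>)
qed

end
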